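(* A connected component $B^\ell$ of nonabsorbing action profiles is rectangular if and only if there is no joint exit at any mixed action profile in $X^\ell$, i.e., ${\cal E}_J(x)=\emptyset$ for all $x\in X^\ell$.
   Context: $I$ is a finite set of players, $A_i$ finite nonempty action sets, $A=\prod_iA_i$, $p:A\to[0,1]$. $B=\{a\in A:p(a)=0\}$; the connected components $B^1,\dots,B^L$ of nonabsorbing action profiles are the connected components of the graph on $B$ in which $a,a'$ are adjacent iff $a_{-i}=a'_{-i}$ for some $i\in I$. $B^\ell$ is rectangular if $B^\ell=\prod_{i\in I}B^\ell_i$ for some $B^\ell_i\subseteq A_i$. Let $\Xi=\prod_i\Delta(A_i)$, $p(x)=\sum_ap(a)\prod_jx_j(a_j)$ (multilinear extension), and $X^\ell:=\{x\in\Xi:\prod_i{\rm supp}(x_i)\subseteq B^\ell\}$. For $x\in X^\ell$, a pair $(J,a_J)$ with $\emptyset\ne J\subseteq I$, $a_J\in\prod_{i\in J}A_i$ is an exit at $x$ if $p(a_J,x_{-J})>0$ and $p(a_{J'},x_{-J'})=0$ for every proper subset $J'\subsetneq J$; it is a joint exit if $|J|\ge2$. ${\cal E}_J(x)$ is the set of joint exits at $x$. *)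

theory Defs
  imports Complex_Main "HOL-Library.FuncSet"
begin

text \<open>Players: a finite set I (of type 'i); action sets A i (actions of type 'a);
pure action profiles are the extensional functions in PiE I A;
mixed strategies x i are functions 'a => real forming a probability on A i.\<close>

definition nonabsorbing :: "'i set \<Rightarrow> ('i \<Rightarrow> 'a set) \<Rightarrow> (('i \<Rightarrow> 'a) \<Rightarrow> real) \<Rightarrow> ('i \<Rightarrow> 'a) set" where
  "nonabsorbing I A p = {a \<in> PiE I A. p a = 0}"

definition unilateral_adj :: "'i set \<Rightarrow> ('i \<Rightarrow> 'a) \<Rightarrow> ('i \<Rightarrow> 'a) \<Rightarrow> bool" where
  "unilateral_adj I a a' \<longleftrightarrow> (\<exists>i\<in>I. \<forall>j\<in>I - {i}. a j = a' j)"

definition adj_graph :: "'i set \<Rightarrow> ('i \<Rightarrow> 'a set) \<Rightarrow> (('i \<Rightarrow> 'a) \<Rightarrow> real) \<Rightarrow> (('i \<Rightarrow> 'a) \<times> ('i \<Rightarrow> 'a)) set" where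
  "adj_graph I A p = {(a, a'). a \<in> nonabsorbing I A p \<and> a' \<in> nonabsorbing I A p \<and> unilateral_adj I a a'}"

definition is_component :: "'i set \<Rightarrow> ('i \<Rightarrow> 'a set) \<Rightarrow> (('i \<Rightarrow> 'a) \<Rightarrow> real) \<Rightarrow> ('i \<Rightarrow> 'a) set \<Rightarrow> bool" where
  "is_component I A p C \<longleftrightarrow>
     (\<exists>b \<in> nonabsorbing I A p. C = {b' \<in> nonabsorbing I A p. (b, b') \<in> (adj_graph I A p)\<^sup>*})"

definition rectangular :: "'i set \<Rightarrow> ('i \<Rightarrow> 'a set) \<Rightarrow> ('i \<Rightarrow> 'a) set \<Rightarrow> bool" where
  "rectangular I A C \<longleftrightarrow> (\<exists>Bs. (\<forall>i\<in>I. Bs i \<subseteq> A i) \<and> C = PiE I Bs)"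

definition mixed_profiles :: "'i set \<Rightarrow> ('i \<Rightarrow> 'a set) \<Rightarrow> ('i \<Rightarrow> 'a \<Rightarrow> real) set" where
  "mixed_profiles I A = {x. \<forall>i\<in>I. (\<forall>b. x i b \<ge> 0) \<and> (\<forall>b. b \<notin> A i \<longrightarrow> x i b = 0)
                                 \<and> (\<Sum>b\<in>A i. x i b) = 1}"

definition supp :: "('a \<Rightarrow> real) \<Rightarrow> 'a set" where
  "supp y = {b. y b \<noteq> 0}"

definition pext :: "'i set \<Rightarrow> ('i \<Rightarrow> 'a set) \<Rightarrow> (('i \<Rightarrow> 'a) \<Rightarrow> real) \<Rightarrow> ('i \<Rightarrow> 'a \<Rightarrow> real) \<Rightarrow> real" where
  "pext I A p x = (\<Sum>a\<in>PiE I A. p a * (\<Prod>j\<in>I. x j (a j)))"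

definition Xcomp :: "'i set \<Rightarrow> ('i \<Rightarrow> 'a set) \<Rightarrow> ('i \<Rightarrow> 'a) set \<Rightarrow> ('i \<Rightarrow> 'a \<Rightarrow> real) set" where
  "Xcomp I A C = {x \<in> mixed_profiles I A. PiE I (\<lambda>i. supp (x i)) \<subseteq> C}"

definition replace_pure :: "('i \<Rightarrow> 'a \<Rightarrow> real) \<Rightarrow> 'i set \<Rightarrow> ('i \<Rightarrow> 'a) \<Rightarrow> ('i \<Rightarrow> 'a \<Rightarrow> real)" where
  "replace_pure x J aJ = (\<lambda>i. if i \<in> J then (\<lambda>b. if b = aJ i then 1 else 0) else x i)"

definition is_exit :: "'i set \<Rightarrow> ('i \<Rightarrow> 'a set) \<Rightarrow> (('i \<Rightarrow> 'a) \<Rightarrow> real) \<Rightarrow> ('i \<Rightarrow> 'a \<Rightarrow> real)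
                        \<Rightarrow> 'i set \<Rightarrow> ('i \<Rightarrow> 'a) \<Rightarrow> bool" where
  "is_exit I A p x J aJ \<longleftrightarrow>
     J \<noteq> {} \<and> J \<subseteq> I \<and> aJ \<in> PiE J A \<and>
     pext I A p (replace_pure x J aJ) > 0 \<and>
     (\<forall>J'. J' \<subset> J \<longrightarrow> pext I A p (replace_pure x J' aJ) = 0)"

definition joint_exits :: "'i set \<Rightarrow> ('i \<Rightarrow> 'a set) \<Rightarrow> (('i \<Rightarrow> 'a) \<Rightarrow> real) \<Rightarrow> ('i \<Rightarrow> 'a \<Rightarrow> real)
                        \<Rightarrow> ('i set \<times> ('i \<Rightarrow> 'a)) set" where
  "joint_exits I A p x = {(J, aJ). is_exit I A p x J aJ \<and> card J \<ge> 2}"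

end

theory Submission
  imports Defs
begin

(*
  If the component is a product B = Pi B_i and (J, a_J) were a joint exit at x, then minimality
  of the exit makes every single deviation (a_i, x_{-i}), i in J, vanish under p; a pure profile
  in supp x with its i-th action replaced by a_i is then nonabsorbing and adjacent to B, so
  a_i in B_i. Hence every profile in the support of (a_J, x_{-J}) lies in B, where p = 0.

  Conversely, if c, c(i := u), c(j := v) lie in the component but c(i := u, j := v) is absorbing,
  then ({i, j}, (u, v)) is a joint exit at the pure profile c. So without joint exits the
  component is closed under completing such squares. Along an adjacency path from c to d every
  step then commutes with overwriting the i-th action, so c(i := d i) stays in the component,
  and the component is the product of its projections.
*)

definition pure_profile :: "('i \<Rightarrow> 'a) \<Rightarrow> 'i \<Rightarrow> 'a \<Rightarrow> real" where
  "pure_profile a i b = (if b = a i then 1 else 0)"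

lemma supp_pure_profile [simp]: "supp (pure_profile a i) = {a i}"
  by (auto simp: supp_def pure_profile_def)

lemma replace_pure_pure_profile:
  "replace_pure (pure_profile c) J a = pure_profile (\<lambda>k. if k \<in> J then a k else c k)"
  by (auto simp: replace_pure_def pure_profile_def fun_eq_iff)

lemma pure_profile_in_Xcomp:
  assumes "\<And>i. i \<in> I \<Longrightarrow> finite (A i)" and "C \<subseteq> PiE I A" and "c \<in> C"
  shows "pure_profile c \<in> Xcomp I A C"
proof -
  have c: "c \<in> PiE I A" using assms(2,3) by blast
  then have "pure_profile c \<in> mixed_profiles I A"
    using assms(1) by (auto simp: mixed_profiles_def pure_profile_def sum.delta')
  moreover have "PiE I (\<lambda>i. supp (pure_profile c i)) = {c}"
    using c by (simp add: PiE_singleton PiE_iff)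
  ultimately show ?thesis using assms(3) by (simp add: Xcomp_def)
qed

lemma pext_pure_profile:
  assumes "finite I" and "\<And>i. i \<in> I \<Longrightarrow> finite (A i)" and e: "e \<in> PiE I A"
  shows "pext I A p (pure_profile e) = p e"
proof -
  have "p a * (\<Prod>j\<in>I. pure_profile e j (a j)) = (if a = e then p a else 0)"
    if a: "a \<in> PiE I A" for a
  proof (cases "a = e")
    case False
    then obtain j where "j \<in> I" "a j \<noteq> e j" using PiE_ext[OF a e] by blast
    then show ?thesis using assms(1) by (auto simp: pure_profile_def prod_zero_iff)
  qed (simp add: pure_profile_def)
  then have "pext I A p (pure_profile e) = (\<Sum>a\<in>PiE I A. if a = e then p a else 0)"
    unfolding pext_def by (intro sum.cong) auto
  also have "\<dots> = p e" using assms by (simp add: sum.delta' finite_PiE)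
  finally show ?thesis .
qed

lemma pext_neq_0_witness:
  assumes "finite I" and "pext I A p x \<noteq> 0"
  obtains a where "a \<in> PiE I A" "p a \<noteq> 0" "\<And>j. j \<in> I \<Longrightarrow> x j (a j) \<noteq> 0"
proof -
  obtain a where "a \<in> PiE I A" "p a * (\<Prod>j\<in>I. x j (a j)) \<noteq> 0"
    using assms(2) unfolding pext_def by (meson sum.neutral)
  with assms(1) that show ?thesis by (auto simp: prod_zero_iff)
qed

lemma pext_eq_0_imp_p_eq_0:
  assumes "finite I" and "\<And>i. i \<in> I \<Longrightarrow> finite (A i)"
    and p_nonneg: "\<And>a. a \<in> PiE I A \<Longrightarrow> 0 \<le> p a"
    and x_nonneg: "\<And>j b. j \<in> I \<Longrightarrow> 0 \<le> x j b"
    and pext: "pext I A p x = 0" and a: "a \<in> PiE I A" and x_pos: "\<And>j. j \<in> I \<Longrightarrow> 0 < x j (a j)"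
  shows "p a = 0"
proof -
  have "\<forall>a\<in>PiE I A. p a * (\<Prod>j\<in>I. x j (a j)) = 0"
    using pext unfolding pext_def
    by (subst (asm) sum_nonneg_eq_0_iff)
       (auto simp: assms(1,2) finite_PiE intro!: mult_nonneg_nonneg prod_nonneg p_nonneg x_nonneg)
  moreover have "0 < (\<Prod>j\<in>I. x j (a j))" by (rule prod_pos) (rule x_pos)
  ultimately show ?thesis using a by fastforce
qed

lemma mixed_profile_nonneg: "x \<in> mixed_profiles I A \<Longrightarrow> i \<in> I \<Longrightarrow> 0 \<le> x i b"
  by (simp add: mixed_profiles_def)

lemma supp_mixed_profile_subset: "x \<in> mixed_profiles I A \<Longrightarrow> i \<in> I \<Longrightarrow> supp (x i) \<subseteq> A i"
  by (auto simp: mixed_profiles_def supp_def)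

lemma supp_mixed_profile_nonempty: "x \<in> mixed_profiles I A \<Longrightarrow> i \<in> I \<Longrightarrow> supp (x i) \<noteq> {}"
  by (auto simp: mixed_profiles_def supp_def) (metis sum.neutral zero_neq_one)

lemma unilateral_adj_fun_upd: "i \<in> I \<Longrightarrow> unilateral_adj I c (c(i := w))"
  by (auto simp: unilateral_adj_def)

lemma sym_adj_graph: "sym (adj_graph I A p)"
  by (auto simp: sym_def adj_graph_def unilateral_adj_def) metis

lemma component_subset_nonabsorbing: "is_component I A p C \<Longrightarrow> C \<subseteq> nonabsorbing I A p"
  by (auto simp: is_component_def)

lemma component_subset_PiE: "is_component I A p C \<Longrightarrow> C \<subseteq> PiE I A"
  by (auto simp: is_component_def nonabsorbing_def)

lemma component_p_eq_0: "is_component I A p C \<Longrightarrow> c \<in> C \<Longrightarrow> p c = 0"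
  by (auto simp: is_component_def nonabsorbing_def)

lemma component_nonempty: "is_component I A p C \<Longrightarrow> C \<noteq> {}"
  by (auto simp: is_component_def)

lemma component_closed:
  "is_component I A p C \<Longrightarrow> c \<in> C \<Longrightarrow> (c, e) \<in> adj_graph I A p \<Longrightarrow> e \<in> C"
  by (auto simp: is_component_def adj_graph_def intro: rtrancl_into_rtrancl)

lemma component_connected:
  assumes "is_component I A p C" and "c \<in> C" and "d \<in> C"
  shows "(c, d) \<in> (adj_graph I A p)\<^sup>*"
proof -
  obtain b where C: "C = {b' \<in> nonabsorbing I A p. (b, b') \<in> (adj_graph I A p)\<^sup>*}"
    using assms(1) by (auto simp: is_component_def)
  then have "(c, b) \<in> (adj_graph I A p)\<^sup>*"
    using assms(2) sym_rtrancl[OF sym_adj_graph] by (auto dest: symD)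
  moreover have "(b, d) \<in> (adj_graph I A p)\<^sup>*" using C assms(3) by blast
  ultimately show ?thesis by (rule rtrancl_trans)
qed

lemma component_fun_upd:
  assumes "is_component I A p C" and "c \<in> C" and "i \<in> I" and "w \<in> A i"
    and "p (c(i := w)) = 0"
  shows "c(i := w) \<in> C"
proof -
  have "c \<in> nonabsorbing I A p" using assms(1,2) component_subset_nonabsorbing by blast
  then have "(c, c(i := w)) \<in> adj_graph I A p"
    using assms(3-5) unilateral_adj_fun_upd
    by (auto simp: adj_graph_def nonabsorbing_def PiE_iff extensional_def)
  with assms(1,2) show ?thesis by (rule component_closed)
qed

lemma exit_singleton_pext_eq_0:
  assumes "is_exit I A p x J aJ" and "2 \<le> card J" and "i \<in> J"
  shows "pext I A p (replace_pure x {i} aJ) = 0"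
proof -
  have "J \<noteq> {i}" using assms(2) by auto
  then have "{i} \<subset> J" using assms(3) by blast
  then show ?thesis using assms(1) by (simp add: is_exit_def)
qed

lemma exit_deviation_in_component:
  assumes "finite I" and finA: "\<And>i. i \<in> I \<Longrightarrow> finite (A i)"
    and p_nonneg: "\<And>a. a \<in> PiE I A \<Longrightarrow> 0 \<le> p a"
    and comp: "is_component I A p C" and x: "x \<in> Xcomp I A C"
    and ex: "is_exit I A p x J aJ" and J: "2 \<le> card J" and "i \<in> J"
    and s: "s \<in> PiE I (\<lambda>j. supp (x j))"
  shows "s(i := aJ i) \<in> C"
proof -
  have xm: "x \<in> mixed_profiles I A" and "s \<in> C" using x s by (auto simp: Xcomp_def)
  have i: "i \<in> I" "aJ i \<in> A i" using ex \<open>i \<in> J\<close> by (auto simp: is_exit_def)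
  have sA: "s \<in> PiE I A" using s supp_mixed_profile_subset[OF xm] by (auto simp: PiE_iff)
  have "p (s(i := aJ i)) = 0"
  proof (rule pext_eq_0_imp_p_eq_0[OF \<open>finite I\<close> finA p_nonneg])
    show "0 \<le> replace_pure x {i} aJ j b" if "j \<in> I" for j b
      using mixed_profile_nonneg[OF xm that] by (simp add: replace_pure_def)
    show "pext I A p (replace_pure x {i} aJ) = 0"
      using exit_singleton_pext_eq_0[OF ex J \<open>i \<in> J\<close>] .
    show "s(i := aJ i) \<in> PiE I A" using sA i by (auto simp: PiE_iff extensional_def)
    show "0 < replace_pure x {i} aJ j ((s(i := aJ i)) j)" if j: "j \<in> I" for j
    proof (cases "j = i")
      case False
      then have "x j (s j) \<noteq> 0" using s j by (auto simp: supp_def)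
      then show ?thesis
        using False mixed_profile_nonneg[OF xm j] by (simp add: replace_pure_def less_le)
    qed (simp add: replace_pure_def)
  qed
  then show ?thesis using component_fun_upd[OF comp \<open>s \<in> C\<close> i] by blast
qed

lemma joint_exits_empty_if_rectangular:
  assumes "finite I" and finA: "\<And>i. i \<in> I \<Longrightarrow> finite (A i)"
    and p_nonneg: "\<And>a. a \<in> PiE I A \<Longrightarrow> 0 \<le> p a"
    and comp: "is_component I A p C" and C: "C = PiE I Bs" and x: "x \<in> Xcomp I A C"
  shows "joint_exits I A p x = {}"
proof (rule ccontr)
  assume "joint_exits I A p x \<noteq> {}"
  then obtain J aJ where ex: "is_exit I A p x J aJ" and J: "2 \<le> card J"
    by (auto simp: joint_exits_def)
  have xm: "x \<in> mixed_profiles I A" and supp_C: "PiE I (\<lambda>j. supp (x j)) \<subseteq> C"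
    using x by (auto simp: Xcomp_def)
  obtain s where s: "s \<in> PiE I (\<lambda>j. supp (x j))"
    using supp_mixed_profile_nonempty[OF xm] by (metis PiE_eq_empty_iff ex_in_conv)
  have supp_Bs: "supp (x j) \<subseteq> Bs j" if "j \<in> I" for j
    using supp_C s that unfolding C subset_PiE by (metis empty_iff)
  have aJ_Bs: "aJ j \<in> Bs j" if "j \<in> J" for j
  proof -
    have "j \<in> I" using ex that by (auto simp: is_exit_def)
    then show ?thesis
      using PiE_mem[of "s(j := aJ j)" I Bs j] exit_deviation_in_component[OF assms(1-4) x ex J that s]
      by (simp add: C)
  qed
  have "pext I A p (replace_pure x J aJ) \<noteq> 0" using ex by (simp add: is_exit_def)
  then obtain a where a: "a \<in> PiE I A" "p a \<noteq> 0"
    and a_pos: "\<And>j. j \<in> I \<Longrightarrow> replace_pure x J aJ j (a j) \<noteq> 0"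
    using pext_neq_0_witness[OF \<open>finite I\<close>] by blast
  have "a j \<in> Bs j" if "j \<in> I" for j
    using a_pos[OF that] aJ_Bs supp_Bs[OF that]
    by (auto simp: replace_pure_def supp_def split: if_splits)
  then have "a \<in> C" using a(1) by (auto simp: C PiE_iff)
  then show False using a(2) component_p_eq_0[OF comp] by blast
qed

lemma square_closed_if_no_joint_exits:
  assumes "finite I" and finA: "\<And>i. i \<in> I \<Longrightarrow> finite (A i)"
    and p_nonneg: "\<And>a. a \<in> PiE I A \<Longrightarrow> 0 \<le> p a"
    and comp: "is_component I A p C" and no_exits: "\<forall>x \<in> Xcomp I A C. joint_exits I A p x = {}"
    and c: "c \<in> C" and ij: "i \<in> I" "j \<in> I" "i \<noteq> j"
    and ci: "c(i := u) \<in> C" and cj: "c(j := v) \<in> C"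
  shows "c(i := u, j := v) \<in> C"
proof -
  have CA: "C \<subseteq> PiE I A" using component_subset_PiE[OF comp] .
  have pure_pext: "pext I A p (pure_profile e) = p e" if "e \<in> PiE I A" for e
    using pext_pure_profile[OF \<open>finite I\<close> finA that] .
  have uv: "u \<in> A i" "v \<in> A j"
    using PiE_mem[of "c(i := u)" I A i] PiE_mem[of "c(j := v)" I A j] ci cj CA ij by auto
  define e where "e = c(i := u, j := v)"
  have e: "e \<in> PiE I A" using c CA ij uv by (auto simp: e_def PiE_iff extensional_def)
  show ?thesis
  proof (rule ccontr)
    assume "c(i := u, j := v) \<notin> C"
    then have "p e \<noteq> 0"
      using component_fun_upd[OF comp ci ij(2) uv(2)] by (auto simp: e_def)
    then have pos: "0 < p e" using p_nonneg[OF e] by simp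
    define J where "J = {i, j}"
    define aJ where "aJ = restrict e J"
    have deviate: "replace_pure (pure_profile c) J' aJ = pure_profile (\<lambda>k. if k \<in> J' then e k else c k)"
      if "J' \<subseteq> J" for J'
      using that unfolding replace_pure_pure_profile aJ_def by (metis restrict_apply' subsetD)
    have "is_exit I A p (pure_profile c) J aJ"
      unfolding is_exit_def
    proof (intro conjI allI impI)
      show "J \<noteq> {}" "J \<subseteq> I" "aJ \<in> PiE J A"
        using e ij by (auto simp: J_def aJ_def)
      have "(\<lambda>k. if k \<in> J then e k else c k) = e" by (auto simp: J_def e_def)
      then show "0 < pext I A p (replace_pure (pure_profile c) J aJ)"
        using deviate[of J] pure_pext[OF e] pos by simp
      fix J' assume "J' \<subset> J"
      then consider "J' = {}" | "J' = {i}" | "J' = {j}" by (auto simp: J_def)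
      then have "(\<lambda>k. if k \<in> J' then e k else c k) \<in> C"
        by cases (use c ci cj ij in \<open>auto simp: e_def fun_upd_def cong: if_cong\<close>)
      then show "pext I A p (replace_pure (pure_profile c) J' aJ) = 0"
        using deviate \<open>J' \<subset> J\<close> pure_pext CA component_p_eq_0[OF comp] by auto
    qed
    moreover have "card J = 2" using ij by (simp add: J_def)
    ultimately have "(J, aJ) \<in> joint_exits I A p (pure_profile c)" by (simp add: joint_exits_def)
    then show False using no_exits pure_profile_in_Xcomp[OF finA CA c] by blast
  qed
qed

lemma fun_upd_closed_if_square_closed:
  assumes C: "C \<subseteq> extensional I"
    and closed: "\<And>c e. c \<in> C \<Longrightarrow> (c, e) \<in> R \<Longrightarrow> e \<in> C"
    and adj: "\<And>c e. (c, e) \<in> R \<Longrightarrow> unilateral_adj I c e"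
    and square: "\<And>c i j u v. \<lbrakk>c \<in> C; i \<in> I; j \<in> I; i \<noteq> j; c(i := u) \<in> C; c(j := v) \<in> C\<rbrakk>
                   \<Longrightarrow> c(i := u, j := v) \<in> C"
    and "(c, d) \<in> R\<^sup>*" and "c \<in> C" and i: "i \<in> I"
  shows "c(i := d i) \<in> C"
  using \<open>(c, d) \<in> R\<^sup>*\<close> \<open>c \<in> C\<close>
proof (induction rule: converse_rtrancl_induct)
  case base
  then show ?case by simp
next
  case (step c c')
  have "c' \<in> C" using closed step.hyps(1) step.prems by blast
  with step.IH have IH: "c'(i := d i) \<in> C" .
  obtain k where k: "k \<in> I" and agree: "\<forall>l\<in>I - {k}. c l = c' l"
    using adj[OF step.hyps(1)] by (auto simp: unilateral_adj_def)
  have agree': "c l = c' l" if "l \<noteq> k" for l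
  proof (cases "l \<in> I")
    case True
    then show ?thesis using agree that by blast
  next
    case False
    then show ?thesis
      using extensional_arb[OF subsetD[OF C \<open>c \<in> C\<close>]] extensional_arb[OF subsetD[OF C \<open>c' \<in> C\<close>]]
      by simp
  qed
  show ?case
  proof (cases "k = i")
    case True
    have "c(i := d i) = c'(i := d i)" using agree' True by (auto simp: fun_eq_iff)
    with IH show ?thesis by (simp only:)
  next
    case False
    have "c'(k := c k) = c" using agree' by (auto simp: fun_eq_iff)
    then have "c'(i := d i, k := c k) \<in> C"
      using square[OF \<open>c' \<in> C\<close> i k] False IH step.prems by simp
    moreover have "c'(i := d i, k := c k) = c(i := d i)" using agree' False by (auto simp: fun_eq_iff)
    ultimately show ?thesis by metis
  qed
qed

lemma eq_PiE_if_fun_upd_closed: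
  assumes "finite I" and C: "C \<subseteq> extensional I" and "C \<noteq> {}"
    and upd: "\<And>c i w. c \<in> C \<Longrightarrow> i \<in> I \<Longrightarrow> w \<in> (\<lambda>d. d i) ` C \<Longrightarrow> c(i := w) \<in> C"
  shows "C = PiE I (\<lambda>i. (\<lambda>c. c i) ` C)"
proof
  show "C \<subseteq> PiE I (\<lambda>i. (\<lambda>c. c i) ` C)"
  proof
    fix c assume c: "c \<in> C"
    show "c \<in> PiE I (\<lambda>i. (\<lambda>c. c i) ` C)"
    proof (rule PiE_I)
      show "c i \<in> (\<lambda>c. c i) ` C" for i using c by (rule imageI)
      show "c i = undefined" if "i \<notin> I" for i using extensional_arb[OF subsetD[OF C c] that] .
    qed
  qed
  show "PiE I (\<lambda>i. (\<lambda>c. c i) ` C) \<subseteq> C"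
  proof
    fix f assume f: "f \<in> PiE I (\<lambda>i. (\<lambda>c. c i) ` C)"
    obtain b where "b \<in> C" using \<open>C \<noteq> {}\<close> by blast
    have "(\<lambda>k. if k \<in> F then f k else b k) \<in> C" if "F \<subseteq> I" for F
      using finite_subset[OF that \<open>finite I\<close>] that
    proof (induction F rule: finite_induct)
      case (insert i F)
      have i: "i \<in> I" using insert.prems by simp
      have "(\<lambda>k. if k \<in> F then f k else b k) \<in> C" using insert by simp
      from upd[OF this i PiE_mem[OF f i]]
      have "(\<lambda>k. if k \<in> F then f k else b k)(i := f i) \<in> C" .
      moreover have "(\<lambda>k. if k \<in> F then f k else b k)(i := f i) = (\<lambda>k. if k \<in> insert i F then f k else b k)"
        by (auto simp: fun_eq_iff)
      ultimately show ?case by simp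
    qed (simp add: \<open>b \<in> C\<close>)
    moreover have "(\<lambda>k. if k \<in> I then f k else b k) = f"
      using extensional_arb[OF subsetD[OF C \<open>b \<in> C\<close>]] PiE_arb[OF f] by (auto simp: fun_eq_iff)
    ultimately show "f \<in> C" by (metis order_refl)
  qed
qed

lemma rectangular_if_no_joint_exits:
  assumes "finite I" and finA: "\<And>i. i \<in> I \<Longrightarrow> finite (A i)"
    and p_nonneg: "\<And>a. a \<in> PiE I A \<Longrightarrow> 0 \<le> p a"
    and comp: "is_component I A p C" and no_exits: "\<forall>x \<in> Xcomp I A C. joint_exits I A p x = {}"
  shows "rectangular I A C"
proof -
  note square = square_closed_if_no_joint_exits[OF assms(1) finA p_nonneg comp no_exits]
  have CA: "C \<subseteq> PiE I A" using component_subset_PiE[OF comp] .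
  then have CE: "C \<subseteq> extensional I" by (simp add: PiE_def subset_iff)
  have adj: "\<And>c e. (c, e) \<in> adj_graph I A p \<Longrightarrow> unilateral_adj I c e"
    by (auto simp: adj_graph_def)
  have "c(i := w) \<in> C" if c: "c \<in> C" and i: "i \<in> I" and w: "w \<in> (\<lambda>d. d i) ` C" for c i w
  proof -
    obtain d where d: "d \<in> C" and "w = d i" using w by blast
    moreover have "c(i := d i) \<in> C"
      by (rule fun_upd_closed_if_square_closed[OF CE component_closed[OF comp] adj square
            component_connected[OF comp c d] c i])
    ultimately show ?thesis by simp
  qed
  then have "C = PiE I (\<lambda>i. (\<lambda>c. c i) ` C)"
    by (rule eq_PiE_if_fun_upd_closed[OF assms(1) CE component_nonempty[OF comp]])
  moreover have "\<forall>i\<in>I. (\<lambda>c. c i) ` C \<subseteq> A i" using CA by (auto simp: PiE_iff)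
  ultimately show ?thesis
    unfolding rectangular_def by (intro exI[of _ "\<lambda>i. (\<lambda>c. c i) ` C"]) simp
qed

theorem mainTheorem6:
  fixes I :: "'i set" and A :: "'i \<Rightarrow> 'a set" and p :: "('i \<Rightarrow> 'a) \<Rightarrow> real"
    and C :: "('i \<Rightarrow> 'a) set"
  assumes "finite I"
    and "\<And>i. i \<in> I \<Longrightarrow> finite (A i) \<and> A i \<noteq> {}"
    and "\<And>a. a \<in> PiE I A \<Longrightarrow> 0 \<le> p a \<and> p a \<le> 1"
    and "is_component I A p C"
  shows "rectangular I A C \<longleftrightarrow> (\<forall>x \<in> Xcomp I A C. joint_exits I A p x = {})"
proof -
  have finA: "\<And>i. i \<in> I \<Longrightarrow> finite (A i)" and p_nonneg: "\<And>a. a \<in> PiE I A \<Longrightarrow> 0 \<le> p a"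
    using assms(2,3) by auto
  show ?thesis
  proof
    assume "rectangular I A C"
    then obtain Bs where "C = PiE I Bs" by (auto simp: rectangular_def)
    then show "\<forall>x \<in> Xcomp I A C. joint_exits I A p x = {}"
      using joint_exits_empty_if_rectangular[OF assms(1) finA p_nonneg assms(4)] by blast
  next
    assume "\<forall>x \<in> Xcomp I A C. joint_exits I A p x = {}"
    then show "rectangular I A C"
      using rectangular_if_no_joint_exits[OF assms(1) finA p_nonneg assms(4)] by blast
  qed
qed

end
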